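(* If $\sum_{i\in I}u_i$ is defined, then for any family $(v_i)_{i\in I}$ of elements of $U$, $\sum_{i\in I}u_i\cdot v_i$ is defined.
   Context: $\mathcal A=\langle U,+,\cdot,\mathbf 0,\mathbf 1\rangle$ is a partial semiring ($\langle U,+,\mathbf 0\rangle$ a commutative monoid with $+$ possibly partial; $\langle U,\cdot,\mathbf 1\rangle$ a monoid with total $\cdot$; two-sided distributivity; $\mathbf 0$ annihilates), naturally ordered ($u\le v$ iff $\exists w.\,u+w=v$ is a partial order), Scott continuous ($+$ and $\cdot$ preserve suprema of directed sets in each argument), and has a top element $\top$ with $\top\ge u$ for all $u\in U$. For an indexed family, $\sum_{i\in I}u_i$ is the supremum of all finite sums $u_{i_1}+\dots+u_{i_n}$ over finite $\{i_1,\dots,i_n\}\subseteq I$. *)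

theory Defs
  imports Main
begin

text \<open>A partial semiring on the whole type 'a: partial addition padd (None = undefined),
  total multiplication mult, constants zero and one.\<close>

definition oadd :: "('a \<Rightarrow> 'a \<Rightarrow> 'a option) \<Rightarrow> 'a option \<Rightarrow> 'a option \<Rightarrow> 'a option" where
  "oadd padd x y = (case x of None \<Rightarrow> None | Some a \<Rightarrow>
                      (case y of None \<Rightarrow> None | Some b \<Rightarrow> padd a b))"

definition partial_semiring ::
  "('a \<Rightarrow> 'a \<Rightarrow> 'a option) \<Rightarrow> ('a \<Rightarrow> 'a \<Rightarrow> 'a) \<Rightarrow> 'a \<Rightarrow> 'a \<Rightarrow> bool" where
  "partial_semiring padd mult zero one \<longleftrightarrow>
     (\<forall>x y. padd x y = padd y x) \<and>
     (\<forall>x y z. oadd padd (oadd padd (Some x) (Some y)) (Some z)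
             = oadd padd (Some x) (oadd padd (Some y) (Some z))) \<and>
     (\<forall>x. padd zero x = Some x) \<and>
     (\<forall>x y z. mult (mult x y) z = mult x (mult y z)) \<and>
     (\<forall>x. mult one x = x \<and> mult x one = x) \<and>
     (\<forall>x y z s. padd y z = Some s \<longrightarrow>
        padd (mult x y) (mult x z) = Some (mult x s) \<and>
        padd (mult y x) (mult z x) = Some (mult s x)) \<and>
     (\<forall>x. mult zero x = zero \<and> mult x zero = zero)"

definition nle :: "('a \<Rightarrow> 'a \<Rightarrow> 'a option) \<Rightarrow> 'a \<Rightarrow> 'a \<Rightarrow> bool" where
  "nle padd u v \<longleftrightarrow> (\<exists>w. padd u w = Some v)"

definition naturally_ordered :: "('a \<Rightarrow> 'a \<Rightarrow> 'a option) \<Rightarrow> bool" where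
  "naturally_ordered padd \<longleftrightarrow>
     (\<forall>x. nle padd x x) \<and>
     (\<forall>x y z. nle padd x y \<longrightarrow> nle padd y z \<longrightarrow> nle padd x z) \<and>
     (\<forall>x y. nle padd x y \<longrightarrow> nle padd y x \<longrightarrow> x = y)"

definition is_lub :: "('a \<Rightarrow> 'a \<Rightarrow> 'a option) \<Rightarrow> 'a set \<Rightarrow> 'a \<Rightarrow> bool" where
  "is_lub padd D s \<longleftrightarrow> (\<forall>d\<in>D. nle padd d s) \<and>
      (\<forall>t. (\<forall>d\<in>D. nle padd d t) \<longrightarrow> nle padd s t)"

definition directed :: "('a \<Rightarrow> 'a \<Rightarrow> 'a option) \<Rightarrow> 'a set \<Rightarrow> bool" where
  "directed padd D \<longleftrightarrow> D \<noteq> {} \<and>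
     (\<forall>x\<in>D. \<forall>y\<in>D. \<exists>z\<in>D. nle padd x z \<and> nle padd y z)"

definition scott_continuous ::
  "('a \<Rightarrow> 'a \<Rightarrow> 'a option) \<Rightarrow> ('a \<Rightarrow> 'a \<Rightarrow> 'a) \<Rightarrow> bool" where
  "scott_continuous padd mult \<longleftrightarrow>
     (\<forall>D. directed padd D \<longrightarrow> (\<exists>s. is_lub padd D s)) \<and>
     (\<forall>D s x. directed padd D \<longrightarrow> is_lub padd D s \<longrightarrow>
        (\<forall>d\<in>D. padd x d \<noteq> None) \<longrightarrow>
        (\<exists>r. padd x s = Some r \<and> is_lub padd {the (padd x d) | d. d \<in> D} r)) \<and>
     (\<forall>D s x. directed padd D \<longrightarrow> is_lub padd D s \<longrightarrow>
        (\<forall>d\<in>D. padd d x \<noteq> None) \<longrightarrow>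
        (\<exists>r. padd s x = Some r \<and> is_lub padd {the (padd d x) | d. d \<in> D} r)) \<and>
     (\<forall>D s x. directed padd D \<longrightarrow> is_lub padd D s \<longrightarrow>
        is_lub padd ((\<lambda>d. mult x d) ` D) (mult x s) \<and>
        is_lub padd ((\<lambda>d. mult d x) ` D) (mult s x))"

definition has_top :: "('a \<Rightarrow> 'a \<Rightarrow> 'a option) \<Rightarrow> bool" where
  "has_top padd \<longleftrightarrow> (\<exists>t. \<forall>u. nle padd u t)"

definition lsum :: "('a \<Rightarrow> 'a \<Rightarrow> 'a option) \<Rightarrow> 'a \<Rightarrow> ('i \<Rightarrow> 'a) \<Rightarrow> 'i list \<Rightarrow> 'a option" where
  "lsum padd zero u xs = foldr (\<lambda>i acc. oadd padd (Some (u i)) acc) xs (Some zero)"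

definition finite_sums :: "('a \<Rightarrow> 'a \<Rightarrow> 'a option) \<Rightarrow> 'a \<Rightarrow> ('i \<Rightarrow> 'a) \<Rightarrow> 'i set \<Rightarrow> 'a set" where
  "finite_sums padd zero u I = {s. \<exists>xs. distinct xs \<and> set xs \<subseteq> I \<and> lsum padd zero u xs = Some s}"

definition sum_defined :: "('a \<Rightarrow> 'a \<Rightarrow> 'a option) \<Rightarrow> 'a \<Rightarrow> ('i \<Rightarrow> 'a) \<Rightarrow> 'i set \<Rightarrow> bool" where
  "sum_defined padd zero u I \<longleftrightarrow>
     (\<forall>xs. distinct xs \<and> set xs \<subseteq> I \<longrightarrow> lsum padd zero u xs \<noteq> None) \<and>
     (\<exists>s. is_lub padd (finite_sums padd zero u I) s)"

end

theory Submission
  imports Defs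
begin

text \<open>Every finite sum of the products is bounded above by the corresponding finite sum of
  the \<open>u\<^sub>i\<close> multiplied by \<open>\<top>\<close>, since \<open>u\<^sub>i v\<^sub>i \<le> u\<^sub>i \<top>\<close> and sums of smaller elements are defined
  whenever sums of larger ones are. So all finite sums of the products are defined; they
  form a directed set under the inclusion of index sets, whose supremum exists by directed
  completeness.\<close>

lemma oadd_Some_Some [simp]: "oadd p (Some a) (Some b) = p a b"
  by (simp add: oadd_def)

lemma oadd_eq_Some_iff:
  "oadd p x y = Some s \<longleftrightarrow> (\<exists>a b. x = Some a \<and> y = Some b \<and> p a b = Some s)"
  by (cases x; cases y) (simp_all add: oadd_def)

locale psemiring =
  fixes padd :: "'a \<Rightarrow> 'a \<Rightarrow> 'a option" and mult :: "'a \<Rightarrow> 'a \<Rightarrow> 'a"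
    and zero one :: 'a
  assumes partial_semiring: "partial_semiring padd mult zero one"
begin

lemma padd_commute: "padd x y = padd y x"
  using partial_semiring unfolding partial_semiring_def by blast

lemma padd_zero_left: "padd zero x = Some x"
  using partial_semiring unfolding partial_semiring_def by blast

lemma padd_assoc:
  "oadd padd (oadd padd (Some x) (Some y)) (Some z) = oadd padd (Some x) (oadd padd (Some y) (Some z))"
  using partial_semiring unfolding partial_semiring_def by blast

lemma distrib_left: "padd y z = Some s \<Longrightarrow> padd (mult x y) (mult x z) = Some (mult x s)"
  using partial_semiring unfolding partial_semiring_def by blast

lemma distrib_right: "padd y z = Some s \<Longrightarrow> padd (mult y x) (mult z x) = Some (mult s x)"
  using partial_semiring unfolding partial_semiring_def by blast

text \<open>Finite sums over index sets, with \<open>None\<close> as an absorbing "undefined" value.\<close>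

sublocale osum: comm_monoid_set "oadd padd" "Some zero"
proof
  fix a b c :: "'a option"
  show "oadd padd (oadd padd a b) c = oadd padd a (oadd padd b c)"
    using padd_assoc by (cases a; cases b; cases c) (simp_all add: oadd_def split: option.split)
  show "oadd padd a b = oadd padd b a"
    using padd_commute by (cases a; cases b) (simp_all add: oadd_def)
  show "oadd padd a (Some zero) = a"
    using padd_commute padd_zero_left by (cases a) (simp_all add: oadd_def)
qed

lemma mult_zero_left [simp]: "mult zero x = zero"
  using partial_semiring unfolding partial_semiring_def by blast

lemma nle_zero: "nle padd zero x"
  using padd_zero_left unfolding nle_def by blast

lemma padd_mono_defined:
  assumes "nle padd a' a" "nle padd b' b" "padd a b = Some s"
  shows "\<exists>s'. padd a' b' = Some s' \<and> nle padd s' s"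
proof -
  obtain c d where "padd a' c = Some a" "padd b' d = Some b"
    using assms(1,2) unfolding nle_def by blast
  then have "oadd padd (oadd padd (Some a') (Some c)) (oadd padd (Some b') (Some d)) = Some s"
    using assms(3) by simp
  then have "oadd padd (oadd padd (Some a') (Some b')) (oadd padd (Some c) (Some d)) = Some s"
    by (simp only: osum.assoc osum.commute osum.left_commute)
  then show ?thesis
    unfolding oadd_eq_Some_iff nle_def by auto
qed

lemma lsum_eq_osum: "distinct xs \<Longrightarrow> lsum padd zero u xs = osum.F (\<lambda>i. Some (u i)) (set xs)"
  by (induction xs) (simp_all add: lsum_def)

lemma lsum_defined_iff_osum_defined:
  "(\<forall>xs. distinct xs \<and> set xs \<subseteq> I \<longrightarrow> lsum padd zero u xs \<noteq> None) \<longleftrightarrow>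
   (\<forall>A. finite A \<and> A \<subseteq> I \<longrightarrow> osum.F (\<lambda>i. Some (u i)) A \<noteq> None)"
  by (metis finite_distinct_list lsum_eq_osum finite_set)

lemma finite_sums_eq_osum:
  "finite_sums padd zero u I = {s. \<exists>A. finite A \<and> A \<subseteq> I \<and> osum.F (\<lambda>i. Some (u i)) A = Some s}"
  unfolding finite_sums_def by (auto simp: lsum_eq_osum) (metis finite_distinct_list lsum_eq_osum)

lemma osum_subset_nle:
  assumes "finite B" "A \<subseteq> B" "osum.F g A = Some a" "osum.F g B = Some b"
  shows "nle padd a b"
proof -
  have "oadd padd (osum.F g (B - A)) (Some a) = Some b"
    using assms osum.subset_diff by metis
  then obtain c where "padd c a = Some b"
    unfolding oadd_eq_Some_iff by blast
  then show ?thesis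
    unfolding nle_def using padd_commute by metis
qed

lemma osum_mult_le_osum_mult_bound:
  assumes "finite A" "osum.F (\<lambda>i. Some (u i)) A = Some b" "\<forall>i\<in>A. nle padd (v i) w"
  shows "\<exists>a. osum.F (\<lambda>i. Some (mult (u i) (v i))) A = Some a \<and> nle padd a (mult b w)"
  using assms
proof (induction A arbitrary: b rule: finite_induct)
  case empty
  then have "b = zero" by simp
  then show ?case by (simp add: nle_zero)
next
  case (insert i A)
  then obtain b' where b': "osum.F (\<lambda>i. Some (u i)) A = Some b'" "padd (u i) b' = Some b"
    by (auto simp: oadd_eq_Some_iff)
  with insert obtain a' where a': "osum.F (\<lambda>i. Some (mult (u i) (v i))) A = Some a'"
    "nle padd a' (mult b' w)" by auto
  have "nle padd (mult (u i) (v i)) (mult (u i) w)"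
    using insert.prems(2) distrib_left unfolding nle_def by blast
  then obtain a where "padd (mult (u i) (v i)) a' = Some a" "nle padd a (mult b w)"
    using padd_mono_defined a'(2) distrib_right[OF b'(2)] by blast
  then show ?case
    using insert.hyps a'(1) by simp
qed

lemma finite_sums_directed:
  assumes "\<forall>A. finite A \<and> A \<subseteq> I \<longrightarrow> osum.F (\<lambda>i. Some (u i)) A \<noteq> None"
  shows "directed padd (finite_sums padd zero u I)"
proof -
  let ?S = "{s. \<exists>A. finite A \<and> A \<subseteq> I \<and> osum.F (\<lambda>i. Some (u i)) A = Some s}"
  have upper_bound: "\<exists>z\<in>?S. nle padd x z \<and> nle padd y z" if x: "x \<in> ?S" and y: "y \<in> ?S" for x y
  proof -
    obtain A where A: "finite A" "A \<subseteq> I" "osum.F (\<lambda>i. Some (u i)) A = Some x"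
      using x by blast
    obtain B where B: "finite B" "B \<subseteq> I" "osum.F (\<lambda>i. Some (u i)) B = Some y"
      using y by blast
    have AB: "finite (A \<union> B)" "A \<union> B \<subseteq> I"
      using A B by auto
    then obtain z where z: "osum.F (\<lambda>i. Some (u i)) (A \<union> B) = Some z"
      using assms by blast
    have "z \<in> ?S"
      using AB z by blast
    moreover have "nle padd x z"
      using osum_subset_nle[OF AB(1) _ A(3) z] by simp
    moreover have "nle padd y z"
      using osum_subset_nle[OF AB(1) _ B(3) z] by simp
    ultimately show ?thesis
      by blast
  qed
  have "zero \<in> ?S"
    by (intro CollectI exI[of _ "{}"]) simp
  then show ?thesis
    unfolding directed_def finite_sums_eq_osum using upper_bound by auto
qed

end

theorem lemmaA2:
  fixes padd :: "'a \<Rightarrow> 'a \<Rightarrow> 'a option" and mult :: "'a \<Rightarrow> 'a \<Rightarrow> 'a"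
    and zero one :: 'a and I :: "'i set" and u v :: "'i \<Rightarrow> 'a"
  assumes "partial_semiring padd mult zero one"
    and "naturally_ordered padd"
    and "scott_continuous padd mult"
    and "has_top padd"
    and "sum_defined padd zero u I"
  shows "sum_defined padd zero (\<lambda>i. mult (u i) (v i)) I"
proof -
  interpret psemiring padd mult zero one
    using assms(1) by unfold_locales
  obtain t where top: "\<forall>x. nle padd x t"
    using assms(4) unfolding has_top_def by blast
  have "\<forall>A. finite A \<and> A \<subseteq> I \<longrightarrow> osum.F (\<lambda>i. Some (u i)) A \<noteq> None"
    using assms(5) lsum_defined_iff_osum_defined unfolding sum_defined_def by blast
  then have products_defined:
    "\<forall>A. finite A \<and> A \<subseteq> I \<longrightarrow> osum.F (\<lambda>i. Some (mult (u i) (v i))) A \<noteq> None"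
    using osum_mult_le_osum_mult_bound top by fastforce
  then have "directed padd (finite_sums padd zero (\<lambda>i. mult (u i) (v i)) I)"
    by (rule finite_sums_directed)
  then obtain s where "is_lub padd (finite_sums padd zero (\<lambda>i. mult (u i) (v i)) I) s"
    using assms(3) unfolding scott_continuous_def by blast
  then show ?thesis
    using products_defined lsum_defined_iff_osum_defined unfolding sum_defined_def by blast
qed

end
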